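(* Let $k\ge2$ and let $H$ be a $k$-uniform hypergraph of maximum degree $\Delta$ with a given perfect matching $M$. Then $Z_{\mathrm{pm}}(H,M,z)\neq0$ for all $z\in\mathbb C$ with $|z|\le\big((\Delta-1+k)e\big)^{-1}$.
   Context: A perfect matching of $H$ is a set of pairwise disjoint hyperedges covering all vertices. $Z_{\mathrm{pm}}(H,M,z)=\sum_{M'}z^{|M\triangle M'|}$, the sum over all perfect matchings $M'$ of $H$. The degree of a vertex is the number of hyperedges containing it. *)

theory Defs
  imports "HOL-Analysis.Analysis"
begin

definition hypergraph :: "'a set \<Rightarrow> 'a set set \<Rightarrow> bool" where
  "hypergraph V E \<longleftrightarrow> finite V \<and> (\<forall>e\<in>E. e \<subseteq> V)"

definition uniform :: "nat \<Rightarrow> 'a set set \<Rightarrow> bool" where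
  "uniform k E \<longleftrightarrow> (\<forall>e\<in>E. card e = k)"

definition hdegree :: "'a set set \<Rightarrow> 'a \<Rightarrow> nat" where
  "hdegree E v = card {e\<in>E. v \<in> e}"

definition max_degree :: "'a set \<Rightarrow> 'a set set \<Rightarrow> nat" where
  "max_degree V E = Max (insert 0 (hdegree E ` V))"

definition perfect_matching :: "'a set \<Rightarrow> 'a set set \<Rightarrow> 'a set set \<Rightarrow> bool" where
  "perfect_matching V E M \<longleftrightarrow> M \<subseteq> E \<and>
     (\<forall>e\<in>M. \<forall>f\<in>M. e \<noteq> f \<longrightarrow> e \<inter> f = {}) \<and> \<Union>M = V"

definition Z_pm :: "'a set \<Rightarrow> 'a set set \<Rightarrow> 'a set set \<Rightarrow> complex \<Rightarrow> complex" where
  "Z_pm V E M z = (\<Sum>M'\<in>{M'. perfect_matching V E M'}. z ^ card (M - M' \<union> (M' - M)))"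

end

theory Submission
  imports Defs
begin

text \<open>Put \<open>\<lambda> = z\<^sup>2\<close>. Two perfect matchings cover the same vertices by \<open>k\<close>-sets, so
  \<open>|M \<triangle> N| = 2 |N - M|\<close> and \<open>Z\<^sub>p\<^sub>m\<close> is \<open>P(V)\<close>, where \<open>P(U)\<close> sums \<open>\<lambda>\<^bsup>|N - M|\<^esup>\<close> over the
  perfect matchings \<open>N\<close> of \<open>U\<close>. Let \<open>core U\<close> be the union of the blocks of \<open>M\<close> inside \<open>U\<close>
  and \<open>c = 1 - 1/(2k)\<close>. By induction on \<open>U\<close>: \<open>c |P(U - B)| \<le> |P(U)|\<close> for every block
  \<open>B \<subseteq> U\<close> when \<open>core U = U\<close>, and \<open>|P(U)| \<le> |P(core U)|\<close> in general. Expanding \<open>P(U)\<close> along a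
  vertex \<open>v\<close> gives \<open>P(U - B)\<close> (or \<open>0\<close> if no block inside \<open>U\<close> contains \<open>v\<close>) plus
  \<open>\<lambda> \<Sum> P(U - f)\<close> over the non-matching edges \<open>f \<ni> v\<close> inside \<open>U\<close>. As \<open>core (U - f)\<close> arises
  from a smaller set \<open>W\<close> with \<open>core W = W\<close> by deleting at most \<open>k - 1\<close> blocks,
  \<open>c\<^bsup>k-1\<^esup> |P(U - f)| \<le> |P(W)|\<close>, and the degree bound makes the \<open>\<lambda>\<close>-term at most \<open>1 - c\<close> times
  the main term. Deleting all blocks of \<open>M\<close> from \<open>V\<close> yields \<open>|P(V)| \<ge> c\<^bsup>|M|\<^esup> > 0\<close>.
  The bound \<open>|z| \<le> 1/(\<Delta> - 1 + k)\<close> already suffices.\<close>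

lemma perfect_matchingD:
  assumes "perfect_matching U E N"
  shows "N \<subseteq> E" "\<Union>N = U" "\<And>e f. e \<in> N \<Longrightarrow> f \<in> N \<Longrightarrow> e \<noteq> f \<Longrightarrow> e \<inter> f = {}"
  using assms unfolding perfect_matching_def by auto

lemma perfect_matchingI:
  assumes "N \<subseteq> E" "\<Union>N = U" "\<And>e f. e \<in> N \<Longrightarrow> f \<in> N \<Longrightarrow> e \<noteq> f \<Longrightarrow> e \<inter> f = {}"
  shows "perfect_matching U E N"
  using assms unfolding perfect_matching_def by blast

lemma perfect_matching_edge_unique:
  assumes "perfect_matching U E N" "e \<in> N" "f \<in> N" "x \<in> e" "x \<in> f"
  shows "e = f"
  using perfect_matchingD(3)[OF assms(1,2,3)] assms(4,5) by blast

lemma perfect_matching_remove_edge: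
  assumes "perfect_matching U E N" "f \<in> N"
  shows "perfect_matching (U - f) E (N - {f})"
proof (rule perfect_matchingI)
  note N = perfect_matchingD[OF assms(1)]
  show "\<Union>(N - {f}) = U - f"
    using N(2,3) assms(2) by blast
qed (use perfect_matchingD[OF assms(1)] in auto)

lemma perfect_matching_insert_edge:
  assumes "perfect_matching (U - f) E N" "f \<in> E" "f \<subseteq> U"
  shows "perfect_matching U E (insert f N)"
proof (rule perfect_matchingI)
  note N = perfect_matchingD[OF assms(1)]
  show "\<Union>(insert f N) = U"
    using N(2) assms(3) by blast
  have "e \<inter> f = {}" if "e \<in> N" for e
    using N(2) that by blast
  then show "e \<inter> g = {}" if "e \<in> insert f N" "g \<in> insert f N" "e \<noteq> g" for e g
    using N(3) that by blast
qed (use perfect_matchingD(1)[OF assms(1)] assms(2) in auto)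

lemma perfect_matching_subset:
  assumes "perfect_matching U E N" "N' \<subseteq> N"
  shows "perfect_matching (\<Union>N') E N'"
  using perfect_matchingD(1,3)[OF assms(1)] assms(2) by (intro perfect_matchingI) auto

lemma perfect_matching_Diff_notin:
  assumes "perfect_matching (U - f) E N" "f \<noteq> {}"
  shows "f \<notin> N"
proof
  assume "f \<in> N"
  then have "f \<subseteq> U - f"
    using perfect_matchingD(2)[OF assms(1)] by (metis Sup_upper)
  then show False
    using assms(2) by blast
qed

lemma perfect_matching_insert_bij:
  assumes "f \<in> E" "f \<subseteq> U" "f \<noteq> {}"
  shows "bij_betw (insert f) {N. perfect_matching (U - f) E N} {N. perfect_matching U E N \<and> f \<in> N}"
proof (rule bij_betw_byWitness[where f' = "\<lambda>N. N - {f}"])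
  have "f \<notin> N" if "perfect_matching (U - f) E N" for N
    using perfect_matching_Diff_notin[OF that assms(3)] .
  then show "\<forall>N\<in>{N. perfect_matching (U - f) E N}. insert f N - {f} = N"
    by auto
  show "insert f ` {N. perfect_matching (U - f) E N} \<subseteq> {N. perfect_matching U E N \<and> f \<in> N}"
    using perfect_matching_insert_edge assms by blast
  show "(\<lambda>N. N - {f}) ` {N. perfect_matching U E N \<and> f \<in> N} \<subseteq> {N. perfect_matching (U - f) E N}"
    using perfect_matching_remove_edge by blast
qed auto

lemma perfect_matching_Union_diff_subset:
  assumes "perfect_matching V E M" "perfect_matching V E N"
  shows "\<Union>(M - N) \<subseteq> \<Union>(N - M)"
proof
  fix x assume "x \<in> \<Union>(M - N)"
  then obtain B where B: "B \<in> M" "B \<notin> N" "x \<in> B" by blast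
  have "x \<in> \<Union>N"
    using perfect_matchingD(2)[OF assms(1)] perfect_matchingD(2)[OF assms(2)] B by blast
  then obtain e where e: "e \<in> N" "x \<in> e" by blast
  have "e \<notin> M"
    using perfect_matching_edge_unique[OF assms(1) _ B(1) _ B(3)] B(2) e by blast
  then show "x \<in> \<Union>(N - M)" using e by blast
qed

lemma power_card_insert_diff:
  fixes w :: "'b :: monoid_mult"
  assumes "finite N" "f \<notin> N"
  shows "w ^ card (insert f N - M) = (if f \<in> M then 1 else w) * w ^ card (N - M)"
proof (cases "f \<in> M")
  case True
  then have "insert f N - M = N - M" by blast
  then show ?thesis using True by simp
next
  case False
  then have "insert f N - M = insert f (N - M)" by blast
  then show ?thesis using False assms by simp
qed

lemma norm_mult_sum_le:
  fixes w :: "'b :: real_normed_field" and b :: "'i \<Rightarrow> 'b"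
  assumes "real (card F) * norm w \<le> q * r" "0 < q" "0 \<le> A"
    and "\<And>i. i \<in> F \<Longrightarrow> q * norm (b i) \<le> A"
  shows "norm (w * sum b F) \<le> r * A"
proof -
  have "q * norm (w * sum b F) \<le> norm w * (\<Sum>i\<in>F. q * norm (b i))"
    using norm_sum[of b F] assms(2) norm_ge_zero[of w]
    by (simp add: norm_mult sum_distrib_left[symmetric] mult.left_commute mult_left_mono)
  also have "\<dots> \<le> norm w * (real (card F) * A)"
    using sum_bounded_above[of F "\<lambda>i. q * norm (b i)" A] assms(4) by (simp add: mult_left_mono)
  also have "\<dots> \<le> q * (r * A)"
    using mult_right_mono[OF assms(1,3)] by (simp add: mult_ac)
  finally show ?thesis
    using assms(2) by simp
qed

locale uniform_hypergraph_pm =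
  fixes V :: "'a set" and E :: "'a set set" and M :: "'a set set" and k :: nat
  assumes hypergraph: "hypergraph V E" and uniform: "uniform k E" and k_pos: "k \<ge> 1"
    and perfect: "perfect_matching V E M"
begin

lemma finite_V: "finite V"
  using hypergraph unfolding hypergraph_def by blast

lemma edge_subset: "e \<in> E \<Longrightarrow> e \<subseteq> V"
  using hypergraph unfolding hypergraph_def by blast

lemma card_edge: "e \<in> E \<Longrightarrow> card e = k"
  using uniform unfolding uniform_def by blast

lemma finite_edge: "e \<in> E \<Longrightarrow> finite e"
  using finite_subset[OF edge_subset finite_V] .

lemma edge_nonempty: "e \<in> E \<Longrightarrow> e \<noteq> {}"
  using card_edge k_pos by force

lemma finite_E: "finite E"
proof (rule finite_subset)
  show "E \<subseteq> Pow V"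
    using edge_subset by blast
qed (simp add: finite_V)

lemma M_subset_E: "M \<subseteq> E" and Union_M: "\<Union>M = V"
  using perfect_matchingD(1,2)[OF perfect] by simp_all

lemma finite_M: "finite M"
  using finite_subset[OF M_subset_E finite_E] .

lemma block_unique: "B \<in> M \<Longrightarrow> B' \<in> M \<Longrightarrow> x \<in> B \<Longrightarrow> x \<in> B' \<Longrightarrow> B = B'"
  using perfect_matching_edge_unique[OF perfect] by blast

lemma finite_perfect_matchings: "finite {N. perfect_matching U E N}"
proof (rule finite_subset)
  show "{N. perfect_matching U E N} \<subseteq> Pow E"
    using perfect_matchingD(1) by blast
qed (simp add: finite_E)

lemma finite_perfect_matching: "perfect_matching U E N \<Longrightarrow> finite N"
  using finite_subset[OF perfect_matchingD(1) finite_E] .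

lemma card_Union_matching:
  assumes "perfect_matching U E N"
  shows "card (\<Union>N) = k * card N"
proof -
  note N = perfect_matchingD[OF assms]
  have "pairwise disjnt N"
    using N(3) unfolding pairwise_def disjnt_def by blast
  then have "card (\<Union>N) = (\<Sum>e\<in>N. card e)"
    using card_Union_disjoint finite_edge N(1) by (metis subsetD)
  also have "\<dots> = k * card N"
    using N(1) card_edge by (simp add: subset_iff)
  finally show ?thesis .
qed

lemma card_symmetric_difference:
  assumes "perfect_matching V E N"
  shows "card (M - N \<union> (N - M)) = 2 * card (N - M)"
proof -
  have "\<Union>(M - N) = \<Union>(N - M)"
    using perfect_matching_Union_diff_subset perfect assms by blast
  then have "card (M - N) = card (N - M)"
    using card_Union_matching[OF perfect_matching_subset[OF perfect, of "M - N"]]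
      card_Union_matching[OF perfect_matching_subset[OF assms, of "N - M"]] k_pos
    by simp
  moreover have "card (M - N \<union> (N - M)) = card (M - N) + card (N - M)"
    using finite_M finite_perfect_matching[OF assms] by (intro card_Un_disjoint) auto
  ultimately show ?thesis
    by linarith
qed

definition match_poly :: "complex \<Rightarrow> 'a set \<Rightarrow> complex" where
  "match_poly w U = (\<Sum>N\<in>{N. perfect_matching U E N}. w ^ card (N - M))"

lemma Z_pm_eq_match_poly: "Z_pm V E M z = match_poly (z\<^sup>2) V"
  unfolding Z_pm_def match_poly_def
  by (rule sum.cong) (simp_all add: card_symmetric_difference power_mult)

lemma match_poly_empty: "match_poly w {} = 1"
proof -
  have "N = {}" if "perfect_matching {} E N" for N
    using perfect_matchingD(1,2)[OF that] edge_nonempty by blast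
  then have "{N. perfect_matching {} E N} = {{}}"
    unfolding perfect_matching_def by auto
  then show ?thesis
    unfolding match_poly_def by simp
qed

lemma sum_perfect_matchings_split_at:
  assumes "v \<in> U"
  shows "(\<Sum>N\<in>{N. perfect_matching U E N}. g N)
       = (\<Sum>f\<in>{f\<in>E. v \<in> f \<and> f \<subseteq> U}. \<Sum>N\<in>{N. perfect_matching U E N \<and> f \<in> N}. g N)"
proof -
  define F where "F = {f\<in>E. v \<in> f \<and> f \<subseteq> U}"
  define A where "A f = {N. perfect_matching U E N \<and> f \<in> N}" for f
  have "{N. perfect_matching U E N} \<subseteq> (\<Union>f\<in>F. A f)"
  proof
    fix N assume "N \<in> {N. perfect_matching U E N}"
    then have N: "perfect_matching U E N" by simp
    then obtain f where "f \<in> N" "v \<in> f"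
      using perfect_matchingD(2)[OF N] assms by blast
    moreover have "f \<subseteq> U" "f \<in> E"
      using perfect_matchingD(1,2)[OF N] \<open>f \<in> N\<close> by auto
    ultimately show "N \<in> (\<Union>f\<in>F. A f)"
      unfolding A_def F_def using N by blast
  qed
  moreover have "(\<Union>f\<in>F. A f) \<subseteq> {N. perfect_matching U E N}"
    unfolding A_def by auto
  ultimately have "{N. perfect_matching U E N} = (\<Union>f\<in>F. A f)"
    by (rule subset_antisym)
  moreover have "A f \<inter> A f' = {}" if "f \<in> F" "f' \<in> F" "f \<noteq> f'" for f f'
  proof -
    have "v \<in> f" "v \<in> f'"
      using that unfolding F_def by auto
    then show ?thesis
      unfolding A_def using perfect_matching_edge_unique[of U E _ f f' v] that(3) by auto
  qed
  moreover have "finite (A f)" for f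
    unfolding A_def using finite_perfect_matchings by simp
  moreover have "finite F"
    unfolding F_def using finite_E by simp
  ultimately have "(\<Sum>N\<in>{N. perfect_matching U E N}. g N) = (\<Sum>f\<in>F. \<Sum>N\<in>A f. g N)"
    by (simp add: sum.UNION_disjoint)
  then show ?thesis
    unfolding A_def F_def .
qed

lemma sum_perfect_matchings_containing:
  assumes "f \<in> E" "f \<subseteq> U"
  shows "(\<Sum>N\<in>{N. perfect_matching U E N \<and> f \<in> N}. w ^ card (N - M))
       = (if f \<in> M then 1 else w) * match_poly w (U - f)"
proof -
  have "finite N \<and> f \<notin> N" if "perfect_matching (U - f) E N" for N
    using finite_perfect_matching[OF that] perfect_matching_Diff_notin[OF that] assms(1) edge_nonempty
    by blast
  then have "(\<Sum>N\<in>{N. perfect_matching U E N \<and> f \<in> N}. w ^ card (N - M))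
      = (\<Sum>N\<in>{N. perfect_matching (U - f) E N}. (if f \<in> M then 1 else w) * w ^ card (N - M))"
    using perfect_matching_insert_bij[OF assms edge_nonempty[OF assms(1)]]
    by (simp add: sum.reindex_bij_betw[symmetric] power_card_insert_diff)
  then show ?thesis
    by (simp add: match_poly_def sum_distrib_left)
qed

lemma match_poly_expand:
  assumes "v \<in> U"
  shows "match_poly w U = (\<Sum>f\<in>{f\<in>M. v \<in> f \<and> f \<subseteq> U}. match_poly w (U - f))
                         + w * (\<Sum>f\<in>{f\<in>E. v \<in> f \<and> f \<subseteq> U \<and> f \<notin> M}. match_poly w (U - f))"
proof -
  define F where "F = {f\<in>E. v \<in> f \<and> f \<subseteq> U}"
  have "finite F"
    unfolding F_def using finite_E by simp
  have "match_poly w U = (\<Sum>f\<in>F. \<Sum>N\<in>{N. perfect_matching U E N \<and> f \<in> N}. w ^ card (N - M))"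
    unfolding match_poly_def[of w U] F_def by (rule sum_perfect_matchings_split_at[OF assms])
  also have "\<dots> = (\<Sum>f\<in>F. (if f \<in> M then 1 else w) * match_poly w (U - f))"
  proof (rule sum.cong[OF refl])
    fix f assume "f \<in> F"
    then show "(\<Sum>N\<in>{N. perfect_matching U E N \<and> f \<in> N}. w ^ card (N - M))
        = (if f \<in> M then 1 else w) * match_poly w (U - f)"
      unfolding F_def by (intro sum_perfect_matchings_containing) auto
  qed
  also have "\<dots> = (\<Sum>f\<in>F. if f \<in> M then match_poly w (U - f) else w * match_poly w (U - f))"
    by (rule sum.cong) simp_all
  also have "\<dots> = (\<Sum>f\<in>F \<inter> M. match_poly w (U - f)) + (\<Sum>f\<in>F \<inter> - M. w * match_poly w (U - f))"
    using sum.If_cases[OF \<open>finite F\<close>, of "\<lambda>f. f \<in> M"] by simp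
  also have "F \<inter> M = {f\<in>M. v \<in> f \<and> f \<subseteq> U}"
    unfolding F_def using M_subset_E by auto
  also have "F \<inter> - M = {f\<in>E. v \<in> f \<and> f \<subseteq> U \<and> f \<notin> M}"
    unfolding F_def by auto
  finally show ?thesis
    by (simp add: sum_distrib_left)
qed

definition blocks_in :: "'a set \<Rightarrow> 'a set set" where
  "blocks_in U = {B\<in>M. B \<subseteq> U}"

definition core :: "'a set \<Rightarrow> 'a set" where
  "core U = \<Union>(blocks_in U)"

lemma finite_blocks_in: "finite (blocks_in U)"
  unfolding blocks_in_def using finite_M by simp

lemma core_subset: "core U \<subseteq> U"
  unfolding core_def blocks_in_def by blast

lemma blocks_in_core: "blocks_in (core U) = blocks_in U"
  unfolding core_def blocks_in_def by blast

lemma core_core: "core (core U) = core U"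
  by (metis blocks_in_core core_def)

lemma blocks_in_Diff: "blocks_in (U - X) = {B\<in>blocks_in U. B \<inter> X = {}}"
  unfolding blocks_in_def by blast

lemma core_Diff: "core (U - X) = core U - \<Union>{B\<in>blocks_in U. B \<inter> X \<noteq> {}}"
proof
  show "core (U - X) \<subseteq> core U - \<Union>{B\<in>blocks_in U. B \<inter> X \<noteq> {}}"
  proof
    fix x assume "x \<in> core (U - X)"
    then obtain B where B: "B \<in> blocks_in U" "B \<inter> X = {}" "x \<in> B"
      unfolding core_def blocks_in_Diff by blast
    have "B' = B" if "B' \<in> blocks_in U" "x \<in> B'" for B'
      using block_unique B that unfolding blocks_in_def by blast
    with B show "x \<in> core U - \<Union>{B\<in>blocks_in U. B \<inter> X \<noteq> {}}"
      unfolding core_def by blast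
  qed
  show "core U - \<Union>{B\<in>blocks_in U. B \<inter> X \<noteq> {}} \<subseteq> core (U - X)"
    unfolding core_def blocks_in_Diff by blast
qed

lemma blocks_meeting_Union:
  assumes "T \<subseteq> blocks_in U"
  shows "{B\<in>blocks_in U. B \<inter> \<Union>T \<noteq> {}} = T"
proof (intro subset_antisym subsetI)
  fix B assume "B \<in> {B\<in>blocks_in U. B \<inter> \<Union>T \<noteq> {}}"
  then obtain B' x where "B \<in> blocks_in U" "B' \<in> T" "x \<in> B" "x \<in> B'"
    by blast
  then show "B \<in> T"
    using block_unique assms unfolding blocks_in_def by blast
next
  fix B assume "B \<in> T"
  moreover have "B \<noteq> {}"
    using \<open>B \<in> T\<close> assms edge_nonempty M_subset_E unfolding blocks_in_def by blast
  ultimately show "B \<in> {B\<in>blocks_in U. B \<inter> \<Union>T \<noteq> {}}"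
    using assms by blast
qed

lemma core_Diff_blocks:
  assumes "core U = U" "T \<subseteq> blocks_in U"
  shows "core (U - \<Union>T) = U - \<Union>T"
  using core_Diff[of U "\<Union>T"] blocks_meeting_Union[OF assms(2)] assms(1) by simp

lemma card_blocks_meeting:
  assumes "T \<subseteq> M" "\<And>B. B \<in> T \<Longrightarrow> B \<inter> X \<noteq> {}" "finite X"
  shows "card T \<le> card X"
proof -
  define g where "g B = (SOME x. x \<in> B \<inter> X)" for B
  have g: "g B \<in> B \<inter> X" if "B \<in> T" for B
    using assms(2)[OF that] unfolding g_def by (metis some_in_eq)
  have "inj_on g T"
  proof (rule inj_onI)
    fix B B' assume "B \<in> T" "B' \<in> T" "g B = g B'"
    then show "B = B'"
      using g[of B] g[of B'] block_unique[of B B' "g B"] assms(1) by auto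
  qed
  moreover have "g ` T \<subseteq> X"
    using g by blast
  ultimately show ?thesis
    by (rule card_inj_on_le[OF _ _ assms(3)])
qed

lemma card_nonmatching_edges_le:
  assumes "v \<in> V"
  shows "card {f\<in>E. v \<in> f \<and> f \<notin> M} + 1 \<le> max_degree V E"
proof -
  obtain B where B: "B \<in> M" "v \<in> B"
    using assms Union_M by blast
  have "card {f\<in>E. v \<in> f \<and> f \<notin> M} + 1 = card (insert B {f\<in>E. v \<in> f \<and> f \<notin> M})"
    using B finite_E by simp
  also have "\<dots> \<le> hdegree E v"
    unfolding hdegree_def using B M_subset_E finite_E by (intro card_mono) auto
  also have "\<dots> \<le> max_degree V E"
    unfolding max_degree_def using assms finite_V by (intro Max_ge) auto
  finally show ?thesis .
qed

end

locale matching_poly_bound = uniform_hypergraph_pm V E M k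
  for V :: "'a set" and E M k +
  fixes w :: complex and c :: real
  assumes c_pos: "0 < c" and c_le_one: "c \<le> 1"
    and small_weight: "\<And>v. v \<in> V \<Longrightarrow> real (card {f\<in>E. v \<in> f \<and> f \<notin> M}) * cmod w \<le> c ^ (k - 1) * (1 - c)"
begin

definition ratio_bound :: "'a set \<Rightarrow> bool" where
  "ratio_bound U \<longleftrightarrow> (\<forall>B\<in>blocks_in U. c * cmod (match_poly w (U - B)) \<le> cmod (match_poly w U))"

lemma small_weight_subset:
  assumes "v \<in> V" "F \<subseteq> {f\<in>E. v \<in> f \<and> f \<notin> M}"
  shows "real (card F) * cmod w \<le> c ^ (k - 1) * (1 - c)"
proof -
  have "card F \<le> card {f\<in>E. v \<in> f \<and> f \<notin> M}"
    using assms(2) finite_E by (intro card_mono) simp_all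
  then have "real (card F) * cmod w \<le> real (card {f\<in>E. v \<in> f \<and> f \<notin> M}) * cmod w"
    by (simp add: mult_right_mono)
  then show ?thesis
    using small_weight[OF assms(1)] by linarith
qed

lemma norm_match_poly_remove_blocks:
  assumes ratio: "\<And>W. W \<subseteq> U \<Longrightarrow> core W = W \<Longrightarrow> ratio_bound W"
    and "core U = U" "T \<subseteq> blocks_in U"
  shows "c ^ card T * cmod (match_poly w (U - \<Union>T)) \<le> cmod (match_poly w U)"
  using finite_subset[OF \<open>T \<subseteq> blocks_in U\<close> finite_blocks_in] \<open>T \<subseteq> blocks_in U\<close>
proof (induction T rule: finite_induct)
  case empty
  then show ?case by simp
next
  case (insert B T)
  define W where "W = U - \<Union>T"
  have "core W = W"
    unfolding W_def using core_Diff_blocks \<open>core U = U\<close> insert.prems by blast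
  moreover have "B \<in> blocks_in W"
  proof -
    have "B \<inter> B' = {}" if "B' \<in> T" for B'
      using perfect_matchingD(3)[OF perfect, of B B'] insert that unfolding blocks_in_def by blast
    then show ?thesis
      using insert.prems unfolding W_def blocks_in_def by blast
  qed
  ultimately have step: "c * cmod (match_poly w (W - B)) \<le> cmod (match_poly w W)"
    using ratio[of W] unfolding W_def ratio_bound_def by blast
  have "U - \<Union>(insert B T) = W - B"
    unfolding W_def by blast
  then have "c ^ card (insert B T) * cmod (match_poly w (U - \<Union>(insert B T)))
      = c ^ card T * (c * cmod (match_poly w (W - B)))"
    using insert.hyps by simp
  also have "\<dots> \<le> c ^ card T * cmod (match_poly w W)"
    using step c_pos by (simp add: mult_left_mono)
  also have "\<dots> \<le> cmod (match_poly w U)"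
    using insert.IH insert.prems unfolding W_def by simp
  finally show ?case .
qed

lemma norm_match_poly_delete_edge:
  assumes core_ih: "\<And>W. W \<subset> U \<Longrightarrow> cmod (match_poly w W) \<le> cmod (match_poly w (core W))"
    and ratio_ih: "\<And>W. W \<subset> U \<Longrightarrow> core W = W \<Longrightarrow> ratio_bound W"
    and "f \<noteq> {}" "f \<subseteq> U" "W \<subset> U" "core W = W" "T \<subseteq> blocks_in W" "card T \<le> k - 1"
    and "core (U - f) = W - \<Union>T"
  shows "c ^ (k - 1) * cmod (match_poly w (U - f)) \<le> cmod (match_poly w W)"
proof -
  have "U - f \<subset> U"
    using \<open>f \<noteq> {}\<close> \<open>f \<subseteq> U\<close> by blast
  then have core_step: "cmod (match_poly w (U - f)) \<le> cmod (match_poly w (W - \<Union>T))"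
    using core_ih \<open>core (U - f) = W - \<Union>T\<close> by metis
  have "c ^ (k - 1) \<le> c ^ card T"
    using \<open>card T \<le> k - 1\<close> c_pos c_le_one by (simp add: power_decreasing)
  then have "c ^ (k - 1) * cmod (match_poly w (U - f)) \<le> c ^ card T * cmod (match_poly w (W - \<Union>T))"
    using core_step c_pos by (intro mult_mono) simp_all
  also have "\<dots> \<le> cmod (match_poly w W)"
    using \<open>W \<subset> U\<close> ratio_ih \<open>core W = W\<close> \<open>T \<subseteq> blocks_in W\<close>
    by (intro norm_match_poly_remove_blocks) auto
  finally show ?thesis .
qed

lemma norm_match_poly_delete_edge_at_block:
  assumes core_ih: "\<And>W. W \<subset> U \<Longrightarrow> cmod (match_poly w W) \<le> cmod (match_poly w (core W))"
    and ratio_ih: "\<And>W. W \<subset> U \<Longrightarrow> core W = W \<Longrightarrow> ratio_bound W"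
    and "core U = U" "B \<in> blocks_in U" "v \<in> B" "f \<in> E" "v \<in> f" "f \<subseteq> U"
  shows "c ^ (k - 1) * cmod (match_poly w (U - f)) \<le> cmod (match_poly w (U - B))"
proof (rule norm_match_poly_delete_edge[OF core_ih ratio_ih])
  define T where "T = {B'\<in>blocks_in U. B' \<inter> f \<noteq> {}}"
  have "B \<in> T"
    using assms(4,5,7) unfolding T_def by blast
  have "card T \<le> card f"
    using assms(6) finite_edge unfolding T_def blocks_in_def by (intro card_blocks_meeting) auto
  then show "card (T - {B}) \<le> k - 1"
    using \<open>B \<in> T\<close> card_edge[OF assms(6)] finite_blocks_in unfolding T_def by simp
  show "core (U - f) = (U - B) - \<Union>(T - {B})"
    using core_Diff[of U f] \<open>core U = U\<close> \<open>B \<in> T\<close> unfolding T_def by auto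
  show "core (U - B) = U - B"
    using core_Diff_blocks[OF \<open>core U = U\<close>, of "{B}"] assms(4) by simp
  show "T - {B} \<subseteq> blocks_in (U - B)"
  proof
    fix B' assume "B' \<in> T - {B}"
    then have "B' \<in> blocks_in U" "B' \<noteq> B"
      unfolding T_def by auto
    then show "B' \<in> blocks_in (U - B)"
      using perfect_matchingD(3)[OF perfect, of B' B] assms(4) unfolding blocks_in_def by blast
  qed
  show "U - B \<subset> U"
    using assms(4,5) unfolding blocks_in_def by blast
qed (use assms(6,8) edge_nonempty in auto)

lemma norm_match_poly_delete_edge_outside_core:
  assumes core_ih: "\<And>W. W \<subset> U \<Longrightarrow> cmod (match_poly w W) \<le> cmod (match_poly w (core W))"
    and ratio_ih: "\<And>W. W \<subset> U \<Longrightarrow> core W = W \<Longrightarrow> ratio_bound W"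
    and "v \<in> U" "v \<notin> core U" "f \<in> E" "v \<in> f" "f \<subseteq> U"
  shows "c ^ (k - 1) * cmod (match_poly w (U - f)) \<le> cmod (match_poly w (core U))"
proof (rule norm_match_poly_delete_edge[OF core_ih ratio_ih])
  define T where "T = {B\<in>blocks_in U. B \<inter> f \<noteq> {}}"
  have "card T \<le> card (f - {v})"
  proof (rule card_blocks_meeting)
    show "B \<inter> (f - {v}) \<noteq> {}" if "B \<in> T" for B
      using that assms(4) unfolding T_def core_def by blast
  qed (use finite_edge assms(5) in \<open>auto simp: T_def blocks_in_def\<close>)
  then show "card T \<le> k - 1"
    using card_edge[OF assms(5)] assms(6) by simp
  show "core (U - f) = core U - \<Union>T"
    using core_Diff[of U f] unfolding T_def by simp
  show "T \<subseteq> blocks_in (core U)"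
    unfolding T_def blocks_in_core by blast
  show "core U \<subset> U"
    using core_subset assms(3,4) by blast
qed (use assms(5,7) edge_nonempty core_core in auto)

lemma ratio_bound_step:
  assumes core_ih: "\<And>W. W \<subset> U \<Longrightarrow> cmod (match_poly w W) \<le> cmod (match_poly w (core W))"
    and ratio_ih: "\<And>W. W \<subset> U \<Longrightarrow> core W = W \<Longrightarrow> ratio_bound W"
    and "U \<subseteq> V" "core U = U"
  shows "ratio_bound U"
  unfolding ratio_bound_def
proof
  fix B assume B: "B \<in> blocks_in U"
  then have "B \<in> E" "B \<subseteq> U"
    using M_subset_E unfolding blocks_in_def by auto
  then obtain v where v: "v \<in> B" "v \<in> U"
    using edge_nonempty by blast
  define F where "F = {f\<in>E. v \<in> f \<and> f \<subseteq> U \<and> f \<notin> M}"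
  have blocks_at_v: "{f\<in>M. v \<in> f \<and> f \<subseteq> U} = {B}"
    using B v block_unique unfolding blocks_in_def by blast
  have expand: "match_poly w U = match_poly w (U - B) + w * (\<Sum>f\<in>F. match_poly w (U - f))"
    using match_poly_expand[OF \<open>v \<in> U\<close>, of w, unfolded blocks_at_v] unfolding F_def by simp
  have "c ^ (k - 1) * cmod (match_poly w (U - f)) \<le> cmod (match_poly w (U - B))" if "f \<in> F" for f
    using that B v unfolding F_def
    by (intro norm_match_poly_delete_edge_at_block[OF core_ih ratio_ih \<open>core U = U\<close>]) auto
  moreover have "real (card F) * cmod w \<le> c ^ (k - 1) * (1 - c)"
    using \<open>U \<subseteq> V\<close> v by (intro small_weight_subset) (auto simp: F_def)
  ultimately have "cmod (w * (\<Sum>f\<in>F. match_poly w (U - f))) \<le> (1 - c) * cmod (match_poly w (U - B))"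
    using c_pos by (intro norm_mult_sum_le[where q = "c ^ (k - 1)"]) simp_all
  then show "c * cmod (match_poly w (U - B)) \<le> cmod (match_poly w U)"
    using norm_diff_ineq[of "match_poly w (U - B)" "w * (\<Sum>f\<in>F. match_poly w (U - f))"] expand
    by (simp add: algebra_simps)
qed

lemma core_bound_step:
  assumes core_ih: "\<And>W. W \<subset> U \<Longrightarrow> cmod (match_poly w W) \<le> cmod (match_poly w (core W))"
    and ratio_ih: "\<And>W. W \<subset> U \<Longrightarrow> core W = W \<Longrightarrow> ratio_bound W"
    and "U \<subseteq> V"
  shows "cmod (match_poly w U) \<le> cmod (match_poly w (core U))"
proof (cases "core U = U")
  case False
  then obtain v where v: "v \<in> U" "v \<notin> core U"
    using core_subset by blast
  define F where "F = {f\<in>E. v \<in> f \<and> f \<subseteq> U \<and> f \<notin> M}"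
  have no_blocks_at_v: "{f\<in>M. v \<in> f \<and> f \<subseteq> U} = {}"
    using v unfolding core_def blocks_in_def by blast
  have expand: "match_poly w U = w * (\<Sum>f\<in>F. match_poly w (U - f))"
    using match_poly_expand[OF \<open>v \<in> U\<close>, of w, unfolded no_blocks_at_v] unfolding F_def by simp
  have "c ^ (k - 1) * cmod (match_poly w (U - f)) \<le> cmod (match_poly w (core U))" if "f \<in> F" for f
    using that v unfolding F_def
    by (intro norm_match_poly_delete_edge_outside_core[OF core_ih ratio_ih]) auto
  moreover have "real (card F) * cmod w \<le> c ^ (k - 1) * (1 - c)"
    using \<open>U \<subseteq> V\<close> v by (intro small_weight_subset) (auto simp: F_def)
  ultimately have "cmod (match_poly w U) \<le> (1 - c) * cmod (match_poly w (core U))"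
    unfolding expand using c_pos by (intro norm_mult_sum_le[where q = "c ^ (k - 1)"]) simp_all
  also have "\<dots> \<le> cmod (match_poly w (core U))"
    using c_pos c_le_one by (intro mult_left_le_one_le) simp_all
  finally show ?thesis .
qed simp

lemma match_poly_bounds:
  assumes "U \<subseteq> V"
  shows "(core U = U \<longrightarrow> ratio_bound U) \<and> cmod (match_poly w U) \<le> cmod (match_poly w (core U))"
  using finite_subset[OF assms finite_V] assms
proof (induction U rule: finite_psubset_induct)
  case (psubset U)
  have IH: "(core W = W \<longrightarrow> ratio_bound W) \<and> cmod (match_poly w W) \<le> cmod (match_poly w (core W))"
    if "W \<subset> U" for W
  proof -
    have "W \<subseteq> V"
      using that psubset.prems by auto
    then show ?thesis
      using psubset.IH[OF that] by simp
  qed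
  show ?case
  proof
    show "core U = U \<longrightarrow> ratio_bound U"
    proof
      assume "core U = U"
      show "ratio_bound U"
        by (rule ratio_bound_step[OF _ _ psubset.prems \<open>core U = U\<close>]) (use IH in auto)
    qed
    show "cmod (match_poly w U) \<le> cmod (match_poly w (core U))"
      by (rule core_bound_step[OF _ _ psubset.prems]) (use IH in auto)
  qed
qed

lemma match_poly_nonzero: "match_poly w V \<noteq> 0"
proof -
  have "blocks_in V = M" "core V = V"
    using Union_M perfect_matchingD(1,2)[OF perfect] unfolding core_def blocks_in_def by auto
  then have "c ^ card M * cmod (match_poly w (V - \<Union>M)) \<le> cmod (match_poly w V)"
    using match_poly_bounds by (intro norm_match_poly_remove_blocks) auto
  then have "c ^ card M \<le> cmod (match_poly w V)"
    using Union_M match_poly_empty by simp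
  moreover have "0 < c ^ card M"
    using c_pos by simp
  ultimately show ?thesis
    by auto
qed

end

lemma inverse_power_bound:
  assumes "k \<ge> 1"
  shows "1 / (4 * real k) \<le> (1 - 1 / (2 * real k)) ^ (k - 1) * (1 - (1 - 1 / (2 * real k)))"
proof -
  have "1 + real (k - 1) * (- 1 / (2 * real k)) \<le> (1 + - 1 / (2 * real k)) ^ (k - 1)"
    using assms by (intro Bernoulli_inequality) (simp add: field_simps)
  moreover have "real (k - 1) * (1 / (2 * real k)) \<le> 1 / 2"
    using assms by (simp add: field_simps of_nat_diff)
  ultimately have "1 / 2 \<le> (1 - 1 / (2 * real k)) ^ (k - 1)"
    by simp
  then have "(1 / 2) / (2 * real k) \<le> (1 - 1 / (2 * real k)) ^ (k - 1) / (2 * real k)"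
    by (rule divide_right_mono) simp
  then show ?thesis
    by simp
qed

lemma weighted_square_bound:
  fixes N D K x :: real
  assumes "0 \<le> N" "N \<le> D" "0 < K" "0 \<le> x" "x \<le> 1 / ((D + K) * exp 1)"
  shows "N * x\<^sup>2 \<le> 1 / (4 * K)"
proof -
  have pos: "0 < D + K"
    using assms(1-3) by linarith
  have "D + K \<le> (D + K) * exp 1"
    using pos by simp
  then have "1 / ((D + K) * exp 1) \<le> 1 / (D + K)"
    using pos by (intro divide_left_mono) simp_all
  then have "x \<le> 1 / (D + K)"
    using assms(5) by linarith
  then have "x\<^sup>2 \<le> (1 / (D + K))\<^sup>2"
    using assms(4) by (rule power_mono)
  then have "x\<^sup>2 \<le> 1 / (D + K)\<^sup>2"
    by (simp add: power_one_over)
  then have "N * x\<^sup>2 \<le> D * (1 / (D + K)\<^sup>2)"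
    using assms(1,2) by (intro mult_mono) simp_all
  also have "\<dots> \<le> 1 / (4 * K)"
  proof -
    have "4 * K * D \<le> (D + K)\<^sup>2"
      using sum_squares_ge_zero[of "D - K" 0] by (simp add: power2_eq_square algebra_simps)
    then show ?thesis
      using pos assms(3) by (simp add: field_simps)
  qed
  finally show ?thesis .
qed

theorem mainTheorem17:
  fixes V :: "'a set" and E :: "'a set set" and M :: "'a set set" and k :: nat and z :: complex
  assumes "k \<ge> 2"
    and "hypergraph V E"
    and "uniform k E"
    and "perfect_matching V E M"
    and "cmod z \<le> 1 / ((real (max_degree V E) - 1 + real k) * exp 1)"
  shows "Z_pm V E M z \<noteq> 0"
proof -
  interpret uniform_hypergraph_pm V E M k
    using assms(1-4) by unfold_locales simp_all
  define c :: real where "c = 1 - 1 / (2 * real k)"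
  have "real (card {f\<in>E. v \<in> f \<and> f \<notin> M}) * cmod (z\<^sup>2) \<le> c ^ (k - 1) * (1 - c)" if "v \<in> V" for v
  proof -
    have "real (card {f\<in>E. v \<in> f \<and> f \<notin> M}) \<le> real (max_degree V E) - 1"
      using card_nonmatching_edges_le[OF that] by linarith
    then have "real (card {f\<in>E. v \<in> f \<and> f \<notin> M}) * (cmod z)\<^sup>2 \<le> 1 / (4 * real k)"
      using assms(1,5) by (intro weighted_square_bound) simp_all
    also have "\<dots> \<le> c ^ (k - 1) * (1 - c)"
      unfolding c_def using assms(1) by (intro inverse_power_bound) simp
    finally show ?thesis
      by (simp add: norm_power)
  qed
  moreover have "0 < c" "c \<le> 1"
    unfolding c_def using assms(1) by (simp_all add: field_simps)
  ultimately interpret matching_poly_bound V E M k "z\<^sup>2" c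
    by unfold_locales simp_all
  show ?thesis
    using Z_pm_eq_match_poly match_poly_nonzero by simp
qed

end
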